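(* Let $(X,\Sigma)$ be an implicational base with closure operator $\phi$, let $\mathcal{B}^+$ be an antichain of $\mathcal{L}(\Sigma)$, let $\mathcal{B}^-$ be its dual antichain in $\mathcal{L}(\Sigma)$, and let $\mathcal{H}=\{X\setminus B\mid B\in\mathcal{B}^+\}$. If $I\in\mathcal{B}^-$ and $T$ is a minimal transversal of $\mathcal{H}$ with $I\subseteq\phi(T)$, then $T$ is a minimal covering set of $I$.
   Context: An implicational base $(X,\Sigma)$ consists of a finite set $X$ and a finite set $\Sigma$ of implications $A\rightarrow b$ with $A\subseteq X$ and $b\in X$. A set $C\subseteq X$ is closed in $\Sigma$ if for every $A\rightarrow b\in\Sigma$, $A\not\subseteq C$ or $b\in C$; $\phi(C)$ denotes the smallest closed set containing $C$. $\mathcal{L}(\Sigma)$ is the lattice of closed sets ordered by inclusion; an antichain of it is a family of pairwise inclusion-incomparable closed sets. For a family $\mathcal{B}$ of closed sets, $\downarrow\mathcal{B}$ (resp. $\uparrow\mathcal{B}$) is the set of closed sets contained in (resp. containing) some member of $\mathcal{B}$. The dual antichain of $\mathcal{B}^+$ is the unique antichain $\mathcal{B}^-$ with $\downarrow\mathcal{B}^+\cup\uparrow\mathcal{B}^-$ equal to the set of all closed sets and $\downarrow\mathcal{B}^+\cap\uparrow\mathcal{B}^-=\emptyset$. A transversal of $\mathcal{H}\subseteq 2^X$ is a set meeting every member of $\mathcal{H}$; minimal means inclusion-minimal. For $T,I\subseteq X$, $T$ is a covering set of $I$ if $I\subseteq\phi(T)$; it is a minimal covering set of $I$ if moreover $I\not\subseteq\phi(T\setminus\{x\})$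 for every $x\in T$. *)

theory Defs
  imports Main
begin

definition impl_base :: "'a set \<Rightarrow> ('a set \<times> 'a) set \<Rightarrow> bool" where
  "impl_base X \<Sigma> \<longleftrightarrow> finite X \<and> finite \<Sigma> \<and> (\<forall>(A,b)\<in>\<Sigma>. A \<subseteq> X \<and> b \<in> X)"

definition closed_in :: "'a set \<Rightarrow> ('a set \<times> 'a) set \<Rightarrow> 'a set \<Rightarrow> bool" where
  "closed_in X \<Sigma> C \<longleftrightarrow> C \<subseteq> X \<and> (\<forall>(A,b)\<in>\<Sigma>. \<not> A \<subseteq> C \<or> b \<in> C)"

definition phi :: "'a set \<Rightarrow> ('a set \<times> 'a) set \<Rightarrow> 'a set \<Rightarrow> 'a set" where
  "phi X \<Sigma> C = \<Inter> {D. closed_in X \<Sigma> D \<and> C \<subseteq> D}"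

definition closed_sets :: "'a set \<Rightarrow> ('a set \<times> 'a) set \<Rightarrow> 'a set set" where
  "closed_sets X \<Sigma> = {C. closed_in X \<Sigma> C}"

definition is_antichain :: "'a set \<Rightarrow> ('a set \<times> 'a) set \<Rightarrow> 'a set set \<Rightarrow> bool" where
  "is_antichain X \<Sigma> \<B> \<longleftrightarrow> \<B> \<subseteq> closed_sets X \<Sigma> \<and>
     (\<forall>B1\<in>\<B>. \<forall>B2\<in>\<B>. B1 \<subseteq> B2 \<longrightarrow> B1 = B2)"

definition down_set :: "'a set \<Rightarrow> ('a set \<times> 'a) set \<Rightarrow> 'a set set \<Rightarrow> 'a set set" where
  "down_set X \<Sigma> \<B> = {C \<in> closed_sets X \<Sigma>. \<exists>B\<in>\<B>. C \<subseteq> B}"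

definition up_set :: "'a set \<Rightarrow> ('a set \<times> 'a) set \<Rightarrow> 'a set set \<Rightarrow> 'a set set" where
  "up_set X \<Sigma> \<B> = {C \<in> closed_sets X \<Sigma>. \<exists>B\<in>\<B>. B \<subseteq> C}"

definition dual_antichain :: "'a set \<Rightarrow> ('a set \<times> 'a) set \<Rightarrow> 'a set set \<Rightarrow> 'a set set \<Rightarrow> bool" where
  "dual_antichain X \<Sigma> Bp Bm \<longleftrightarrow> is_antichain X \<Sigma> Bm \<and>
     down_set X \<Sigma> Bp \<union> up_set X \<Sigma> Bm = closed_sets X \<Sigma> \<and>
     down_set X \<Sigma> Bp \<inter> up_set X \<Sigma> Bm = {}"

definition transversal :: "'a set set \<Rightarrow> 'a set \<Rightarrow> bool" where
  "transversal H T \<longleftrightarrow> (\<forall>E\<in>H. T \<inter> E \<noteq> {})"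

definition minimal_transversal :: "'a set set \<Rightarrow> 'a set \<Rightarrow> bool" where
  "minimal_transversal H T \<longleftrightarrow> transversal H T \<and> (\<forall>T'. T' \<subset> T \<longrightarrow> \<not> transversal H T')"

definition minimal_covering_set :: "'a set \<Rightarrow> ('a set \<times> 'a) set \<Rightarrow> 'a set \<Rightarrow> 'a set \<Rightarrow> bool" where
  "minimal_covering_set X \<Sigma> T I \<longleftrightarrow> I \<subseteq> phi X \<Sigma> T \<and>
     (\<forall>x\<in>T. \<not> I \<subseteq> phi X \<Sigma> (T - {x}))"

end

theory Submission
  imports Defs
begin

text \<open>If dropping some x from T still covered I, then, T being a minimal transversal of the
  complements, T - {x} would lie inside some B \<in> Bp; as B is closed, so would
  \<phi>(T - {x}) \<supseteq> I. But I lies in the up-set of Bm, which is disjoint from the down-set of Bp.\<close>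

lemma phi_subset_closed:
  assumes "closed_in X \<Sigma> D" and "C \<subseteq> D"
  shows "phi X \<Sigma> C \<subseteq> D"
  using assms unfolding phi_def by blast

lemma minimal_transversal_complements_remove:
  assumes "minimal_transversal ((\<lambda>B. X - B) ` \<B>) T" and "T \<subseteq> X" and "x \<in> T"
  obtains B where "B \<in> \<B>" and "T - {x} \<subseteq> B"
proof -
  have "\<not> transversal ((\<lambda>B. X - B) ` \<B>) (T - {x})"
    using assms(1,3) unfolding minimal_transversal_def by blast
  then obtain B where "B \<in> \<B>" and "(T - {x}) \<inter> (X - B) = {}"
    unfolding transversal_def by blast
  with assms(2) show thesis using that by blast
qed

lemma dual_antichain_not_below:
  assumes "dual_antichain X \<Sigma> Bp Bm" and "I \<in> Bm" and "B \<in> Bp"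
  shows "\<not> I \<subseteq> B"
proof
  assume "I \<subseteq> B"
  have "I \<in> closed_sets X \<Sigma>"
    using assms(1,2) unfolding dual_antichain_def is_antichain_def by blast
  with \<open>I \<subseteq> B\<close> assms(2,3) have "I \<in> down_set X \<Sigma> Bp \<inter> up_set X \<Sigma> Bm"
    unfolding down_set_def up_set_def by blast
  with assms(1) show False unfolding dual_antichain_def by blast
qed

theorem lemma4:
  fixes X :: "'a set" and \<Sigma> :: "('a set \<times> 'a) set"
  assumes "impl_base X \<Sigma>"
    and "is_antichain X \<Sigma> Bp"
    and "dual_antichain X \<Sigma> Bp Bm"
    and "I \<in> Bm"
    and "T \<subseteq> X"
    and "minimal_transversal ((\<lambda>B. X - B) ` Bp) T"
    and "I \<subseteq> phi X \<Sigma> T"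
  shows "minimal_covering_set X \<Sigma> T I"
  unfolding minimal_covering_set_def
proof (intro conjI ballI notI)
  show "I \<subseteq> phi X \<Sigma> T" by fact
next
  fix x assume "x \<in> T" and covers: "I \<subseteq> phi X \<Sigma> (T - {x})"
  obtain B where "B \<in> Bp" and "T - {x} \<subseteq> B"
    using assms(6,5) \<open>x \<in> T\<close> by (rule minimal_transversal_complements_remove)
  moreover have "closed_in X \<Sigma> B"
    using assms(2) \<open>B \<in> Bp\<close> unfolding is_antichain_def closed_sets_def by blast
  ultimately have "I \<subseteq> B"
    using phi_subset_closed covers by (meson order_trans)
  with dual_antichain_not_below[OF assms(3,4) \<open>B \<in> Bp\<close>] show False ..
qed

end
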